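(* Let $G=(V,E,s,t)$ be a directed $st$-graph. Then $G$ is weak if and only if there exist a minimal vertex separator $T$ of $G$, vertices $a,b\in T$ (possibly $a=b$), and a directed walk of length at least one from $a$ to $b$.
   Context: A directed $st$-graph $G=(V,E,s,t)$ is a finite directed graph with no self-loops and no parallel edges, with distinct source $s$ (no incoming edges) and sink $t$ (no outgoing edges), such that every vertex lies on some directed walk from $s$ to $t$. An $st$-path (or just path) is a directed walk from $s$ to $t$, possibly repeating vertices; $P(G)$ denotes the set of such walks. A channel on $G$ is a charge function $\eta:V\to\mathbb{N}\cup\{\infty\}$ with $\eta(s)=\eta(t)=\infty$ and $\eta(v)\in\mathbb{N}$ otherwise. A flow for $\eta$ is a finitely supported function $\phi:P(G)\to\mathbb{N}$ such that $\phi(v):=\sum_{p\in P(G)} m_v(p)\,\phi(p)\le\eta(v)$ for all $v\in V$, where $m_v(p)$ is the number of occurrences of $v$ in $p$. Its value is $\sum_p\phi(p)$. $\max_\eta$ is the maximum value of a flow for $\eta$; $\eta$ is dead if $\max_\eta=0$. The residual of $\eta$ after $\phi$ is $\eta'(v)=\eta(v)-\phi(v)$. A flow $\phi$ inhibits $\eta$ if the residual of $\eta$ after $\phi$ is dead; $\min_\eta$ is the smallest value of an inhibiting flow for $\eta$. $G$ is weak if $\min_\eta\neq\max_\eta$ for some channel $\eta$ on $G$. A vertex separator is a set $T\subseteq V$ such that every $st$-walk contains a vertex of $T$ (so $\{s\}$ and $\{t\}$ are separators); a minimal vertex separator (mvs) is an inclusion-minimal vertex separator. *)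

theory Defs
  imports Main "HOL-Library.Extended_Nat"
begin

text \<open>A directed graph is given by a vertex set V and an edge relation E (a set of
ordered pairs, so there are no parallel edges).\<close>

definition st_graph :: "'v set \<Rightarrow> ('v \<times> 'v) set \<Rightarrow> 'v \<Rightarrow> 'v \<Rightarrow> bool" where
  "st_graph V E s t \<longleftrightarrow>
     finite V \<and> E \<subseteq> V \<times> V \<and> (\<forall>v. (v, v) \<notin> E) \<and>
     s \<in> V \<and> t \<in> V \<and> s \<noteq> t \<and>
     (\<forall>u. (u, s) \<notin> E) \<and> (\<forall>u. (t, u) \<notin> E) \<and>
     (\<forall>v\<in>V. \<exists>p. p \<noteq> [] \<and> hd p = s \<and> last p = t \<and> v \<in> set p \<and>
                 (\<forall>i < length p - 1. (p ! i, p ! Suc i) \<in> E))"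

definition is_walk :: "('v \<times> 'v) set \<Rightarrow> 'v list \<Rightarrow> bool" where
  "is_walk E p \<longleftrightarrow> p \<noteq> [] \<and> (\<forall>i < length p - 1. (p ! i, p ! Suc i) \<in> E)"

text \<open>st-paths: walks from s to t (vertices may repeat).\<close>
definition st_paths :: "('v \<times> 'v) set \<Rightarrow> 'v \<Rightarrow> 'v \<Rightarrow> 'v list set" where
  "st_paths E s t = {p. is_walk E p \<and> hd p = s \<and> last p = t}"

definition channel :: "'v set \<Rightarrow> 'v \<Rightarrow> 'v \<Rightarrow> ('v \<Rightarrow> enat) \<Rightarrow> bool" where
  "channel V s t \<eta> \<longleftrightarrow> \<eta> s = \<infinity> \<and> \<eta> t = \<infinity> \<and> (\<forall>v\<in>V - {s, t}. \<eta> v \<noteq> \<infinity>)"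

definition supp :: "('v list \<Rightarrow> nat) \<Rightarrow> 'v list set" where
  "supp \<phi> = {p. \<phi> p \<noteq> 0}"

definition load :: "('v list \<Rightarrow> nat) \<Rightarrow> 'v \<Rightarrow> nat" where
  "load \<phi> v = (\<Sum>p\<in>supp \<phi>. count_list p v * \<phi> p)"

definition flow_value :: "('v list \<Rightarrow> nat) \<Rightarrow> nat" where
  "flow_value \<phi> = (\<Sum>p\<in>supp \<phi>. \<phi> p)"

definition is_flow :: "'v set \<Rightarrow> ('v \<times> 'v) set \<Rightarrow> 'v \<Rightarrow> 'v \<Rightarrow> ('v \<Rightarrow> enat)
    \<Rightarrow> ('v list \<Rightarrow> nat) \<Rightarrow> bool" where
  "is_flow V E s t \<eta> \<phi> \<longleftrightarrow> finite (supp \<phi>) \<and> supp \<phi> \<subseteq> st_paths E s t \<and>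
     (\<forall>v\<in>V. enat (load \<phi> v) \<le> \<eta> v)"

definition max_flow :: "'v set \<Rightarrow> ('v \<times> 'v) set \<Rightarrow> 'v \<Rightarrow> 'v \<Rightarrow> ('v \<Rightarrow> enat) \<Rightarrow> enat" where
  "max_flow V E s t \<eta> = (SUP \<phi>\<in>{\<phi>. is_flow V E s t \<eta> \<phi>}. enat (flow_value \<phi>))"

definition dead :: "'v set \<Rightarrow> ('v \<times> 'v) set \<Rightarrow> 'v \<Rightarrow> 'v \<Rightarrow> ('v \<Rightarrow> enat) \<Rightarrow> bool" where
  "dead V E s t \<eta> \<longleftrightarrow> max_flow V E s t \<eta> = 0"

definition residual :: "('v \<Rightarrow> enat) \<Rightarrow> ('v list \<Rightarrow> nat) \<Rightarrow> 'v \<Rightarrow> enat" where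
  "residual \<eta> \<phi> = (\<lambda>v. \<eta> v - enat (load \<phi> v))"

definition inhibits :: "'v set \<Rightarrow> ('v \<times> 'v) set \<Rightarrow> 'v \<Rightarrow> 'v \<Rightarrow> ('v \<Rightarrow> enat)
    \<Rightarrow> ('v list \<Rightarrow> nat) \<Rightarrow> bool" where
  "inhibits V E s t \<eta> \<phi> \<longleftrightarrow> is_flow V E s t \<eta> \<phi> \<and> dead V E s t (residual \<eta> \<phi>)"

text \<open>Minimum value of an inhibiting flow (infimum in enat; infinity if none exists).\<close>
definition min_flow :: "'v set \<Rightarrow> ('v \<times> 'v) set \<Rightarrow> 'v \<Rightarrow> 'v \<Rightarrow> ('v \<Rightarrow> enat) \<Rightarrow> enat" where
  "min_flow V E s t \<eta> = (INF \<phi>\<in>{\<phi>. inhibits V E s t \<eta> \<phi>}. enat (flow_value \<phi>))"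

definition weak :: "'v set \<Rightarrow> ('v \<times> 'v) set \<Rightarrow> 'v \<Rightarrow> 'v \<Rightarrow> bool" where
  "weak V E s t \<longleftrightarrow> (\<exists>\<eta>. channel V s t \<eta> \<and> min_flow V E s t \<eta> \<noteq> max_flow V E s t \<eta>)"

definition vertex_separator :: "'v set \<Rightarrow> ('v \<times> 'v) set \<Rightarrow> 'v \<Rightarrow> 'v \<Rightarrow> 'v set \<Rightarrow> bool" where
  "vertex_separator V E s t T \<longleftrightarrow> T \<subseteq> V \<and> (\<forall>p\<in>st_paths E s t. set p \<inter> T \<noteq> {})"

definition mvs :: "'v set \<Rightarrow> ('v \<times> 'v) set \<Rightarrow> 'v \<Rightarrow> 'v \<Rightarrow> 'v set \<Rightarrow> bool" where
  "mvs V E s t T \<longleftrightarrow> vertex_separator V E s t T \<and>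
     (\<forall>T'. T' \<subset> T \<longrightarrow> \<not> vertex_separator V E s t T')"

end

theory Submission
  imports Defs
begin

text \<open>
  If a minimal separator \<open>T\<close> contains vertices \<open>a\<close>, \<open>b\<close> joined by a walk \<open>w\<close>, splice \<open>w\<close>
  between an st-path meeting \<open>T\<close> only in \<open>a\<close> and one meeting \<open>T\<close> only in \<open>b\<close>; this gives a
  path \<open>q\<close> that passes \<open>T\<close> at least twice as often as either of them. With capacities equal
  to the vertex counts of \<open>q\<close> on \<open>T\<close> (and large enough elsewhere), \<open>q\<close> alone exhausts \<open>T\<close>, so
  it is an inhibiting flow of value 1, while the two private paths form a flow of value 2.

  Conversely, a maximum flow always inhibits, so \<open>min \<le> max\<close>. If \<open>\<phi>\<close> inhibits, the
  vertices it saturates separate \<open>s\<close> from \<open>t\<close> and contain a minimal separator \<open>T\<close>. When no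
  walk returns to \<open>T\<close>, every st-path meets \<open>T\<close> exactly once, so the value of any flow equals
  its load on \<open>T\<close>; this is bounded by the capacities on \<open>T\<close>, which are the loads of \<open>\<phi>\<close>.
\<close>

lemma is_walk_iff_successively:
  "is_walk E p \<longleftrightarrow> p \<noteq> [] \<and> successively (\<lambda>x y. (x, y) \<in> E) p"
  unfolding is_walk_def successively_conv_nth by (auto simp: less_diff_conv)

lemma st_paths_iff:
  "p \<in> st_paths E s t \<longleftrightarrow>
     p \<noteq> [] \<and> successively (\<lambda>x y. (x, y) \<in> E) p \<and> hd p = s \<and> last p = t"
  unfolding st_paths_def is_walk_iff_successively by auto

lemma st_paths_splice:
  assumes "u @ x # v \<in> st_paths E s t" and "u' @ x # v' \<in> st_paths E s t"
  shows "u @ x # v' \<in> st_paths E s t"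
proof -
  have "successively (\<lambda>x y. (x, y) \<in> E) (u @ [x])"
    using assms(1) successively_append_iff[of _ "u @ [x]" v] by (auto simp: st_paths_iff)
  moreover have "successively (\<lambda>x y. (x, y) \<in> E) (x # v')"
    using assms(2) by (auto simp: st_paths_iff successively_append_iff)
  ultimately have "successively (\<lambda>x y. (x, y) \<in> E) (u @ x # v')"
    using successively_append_iff[of _ "u @ [x]" v'] by (cases v') auto
  moreover have "hd (u @ x # v') = s" using assms(1) by (cases u) (auto simp: st_paths_iff)
  moreover have "last (u @ x # v') = t" using assms(2) by (cases v') (auto simp: st_paths_iff)
  ultimately show ?thesis by (simp add: st_paths_iff)
qed

lemma st_paths_distinct_subpath:
  assumes "p \<in> st_paths E s t"
  shows "\<exists>q\<in>st_paths E s t. distinct q \<and> set q \<subseteq> set p"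
  using assms
proof (induction "length p" arbitrary: p rule: less_induct)
  case less
  show ?case
  proof (cases "distinct p")
    case False
    then obtain xs ys zs y where p: "p = xs @ [y] @ ys @ [y] @ zs"
      using not_distinct_decomp by blast
    have "xs @ y # zs \<in> st_paths E s t"
      using st_paths_splice[of xs y "ys @ y # zs" E s t "xs @ y # ys" zs] less.prems p by simp
    with less.hyps[of "xs @ y # zs"] obtain q
      where "q \<in> st_paths E s t" "distinct q" "set q \<subseteq> set (xs @ y # zs)"
      unfolding p by auto
    then show ?thesis unfolding p by auto
  qed (use less.prems in blast)
qed

lemma st_paths_through_walk:
  assumes "u @ a # v \<in> st_paths E s t" and "u' @ b # v' \<in> st_paths E s t"
    and "is_walk E w" and "hd w = a" and "last w = b"
  shows "u @ w @ v' \<in> st_paths E s t"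
proof -
  obtain w1 where w1: "w = a # w1" using assms(3,4) by (cases w) (auto simp: is_walk_def)
  obtain w2 where w2: "w = w2 @ [b]" using assms(3,5) by (metis append_butlast_last_id is_walk_def)
  have "successively (\<lambda>x y. (x, y) \<in> E) (u @ [a])"
    using assms(1) successively_append_iff[of _ "u @ [a]" v] by (auto simp: st_paths_iff)
  then have "successively (\<lambda>x y. (x, y) \<in> E) (u @ w)"
    using assms(3) successively_append_iff[of _ "u @ [a]" w1]
    by (cases w1) (auto simp: w1 is_walk_iff_successively)
  moreover have "successively (\<lambda>x y. (x, y) \<in> E) (b # v')"
    using assms(2) by (auto simp: st_paths_iff successively_append_iff)
  ultimately have "successively (\<lambda>x y. (x, y) \<in> E) (u @ w @ v')"
    using successively_append_iff[of _ "u @ w2 @ [b]" v'] by (cases v') (auto simp: w2)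
  moreover have "hd (u @ w @ v') = s" using assms(1) by (cases u) (auto simp: w1 st_paths_iff)
  moreover have "last (u @ w @ v') = t" using assms(2) by (cases v') (auto simp: w2 st_paths_iff)
  ultimately show ?thesis by (simp add: st_paths_iff w1)
qed

definition walk_returns :: "('v \<times> 'v) set \<Rightarrow> 'v set \<Rightarrow> bool" where
  "walk_returns E T \<longleftrightarrow>
     (\<exists>a b p. a \<in> T \<and> b \<in> T \<and> is_walk E p \<and> length p \<ge> 2 \<and> hd p = a \<and> last p = b)"

lemma mvs_exists_subset:
  assumes "finite S" and "vertex_separator V E s t S"
  shows "\<exists>T\<subseteq>S. mvs V E s t T"
  using assms
proof (induction S rule: finite_psubset_induct)
  case (psubset S)
  show ?case
  proof (cases "mvs V E s t S")
    case False
    then obtain T where "T \<subset> S" "vertex_separator V E s t T"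
      using psubset.prems unfolding mvs_def by auto
    with psubset.IH show ?thesis by (meson order.strict_implies_order order_trans)
  qed blast
qed

lemma mvs_eq_singleton:
  assumes "mvs V E s t T" and "x \<in> T" and "\<forall>p\<in>st_paths E s t. x \<in> set p"
  shows "T = {x}"
proof (rule ccontr)
  assume "T \<noteq> {x}"
  with assms(2) have "{x} \<subset> T" by auto
  moreover have "vertex_separator V E s t {x}"
    using assms unfolding mvs_def vertex_separator_def by auto
  ultimately show False using assms(1) unfolding mvs_def by blast
qed

lemma mvs_private_path:
  assumes "mvs V E s t T" and "x \<in> T"
  shows "\<exists>u v. u @ x # v \<in> st_paths E s t \<and>
           (\<forall>y\<in>T. count_list (u @ x # v) y = (if y = x then 1 else 0))"
proof -
  have "T - {x} \<subset> T" using assms(2) by auto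
  then have "\<not> vertex_separator V E s t (T - {x})" using assms(1) unfolding mvs_def by blast
  then obtain p where p: "p \<in> st_paths E s t" "set p \<inter> (T - {x}) = {}"
    using assms(1) unfolding mvs_def vertex_separator_def by auto
  then have "x \<in> set p"
    using assms(1) unfolding mvs_def vertex_separator_def by auto
  obtain u r where ur: "p = u @ x # r" "x \<notin> set u"
    using split_list_first[OF \<open>x \<in> set p\<close>] by blast
  obtain u' v where uv: "p = u' @ x # v" "x \<notin> set v"
    using split_list_last[OF \<open>x \<in> set p\<close>] by blast
  have path: "u @ x # v \<in> st_paths E s t"
    using st_paths_splice[of u x r E s t u' v] p(1) ur(1) uv(1) by argo
  have "count_list (u @ x # v) y = (if y = x then 1 else 0)" if "y \<in> T" for y
  proof (cases "y = x")
    case False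
    with that p(2) have "y \<notin> set p" by blast
    then have "y \<notin> set (u @ x # v)" using False ur(1) uv(1) by (metis Un_iff set_append set_ConsD)
    with False show ?thesis by simp
  qed (use ur(2) uv(2) in simp)
  with path show ?thesis by blast
qed

lemma mvs_meets_st_path_once:
  assumes "mvs V E s t T" and "\<not> walk_returns E T" and "p \<in> st_paths E s t"
  shows "length (filter (\<lambda>x. x \<in> T) p) = 1"
proof -
  have "\<exists>x\<in>set p. x \<in> T" using assms(1,3) unfolding mvs_def vertex_separator_def by auto
  from split_list_first_prop[OF this]
  obtain u a r where p: "p = u @ a # r" "a \<in> T" "\<forall>y\<in>set u. y \<notin> T" by blast
  have "filter (\<lambda>x. x \<in> T) r = []"
  proof (rule ccontr)
    assume "filter (\<lambda>x. x \<in> T) r \<noteq> []"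
    then obtain b where "b \<in> set r" "b \<in> T" by (auto simp: filter_empty_conv)
    then obtain r1 r2 where r: "r = r1 @ b # r2" "b \<in> T" by (blast dest: split_list)
    have "successively (\<lambda>x y. (x, y) \<in> E) (u @ (a # r1 @ [b]) @ r2)"
      using assms(3) unfolding p r by (simp add: st_paths_iff)
    then have "is_walk E (a # r1 @ [b])"
      unfolding is_walk_iff_successively successively_append_iff[of _ u]
        successively_append_iff[of _ "a # r1 @ [b]"] by blast
    moreover have "length (a # r1 @ [b]) \<ge> 2" "hd (a # r1 @ [b]) = a" "last (a # r1 @ [b]) = b"
      by simp_all
    ultimately have "walk_returns E T" unfolding walk_returns_def using p(2) r(2) by blast
    with assms(2) show False by contradiction
  qed
  with p show ?thesis by simp
qed

definition path_flow :: "'v list list \<Rightarrow> 'v list \<Rightarrow> nat" where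
  "path_flow ps = count_list ps"

lemma supp_path_flow [simp]: "supp (path_flow ps) = set ps"
  unfolding supp_def path_flow_def by (auto simp: count_list_0_iff)

lemma load_path_flow: "load (path_flow ps) v = (\<Sum>p\<leftarrow>ps. count_list p v)"
  unfolding load_def supp_path_flow
  by (simp add: sum_list_map_eq_sum_count path_flow_def mult.commute)

lemma flow_value_path_flow [simp]: "flow_value (path_flow ps) = length ps"
  unfolding flow_value_def supp_path_flow by (simp add: path_flow_def sum_count_set)

lemma load_eq_sum_superset:
  assumes "finite A" and "supp \<phi> \<subseteq> A"
  shows "load \<phi> v = (\<Sum>p\<in>A. count_list p v * \<phi> p)"
  unfolding load_def using assms by (intro sum.mono_neutral_left) (auto simp: supp_def)

lemma flow_value_eq_sum_superset:
  assumes "finite A" and "supp \<phi> \<subseteq> A"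
  shows "flow_value \<phi> = (\<Sum>p\<in>A. \<phi> p)"
  unfolding flow_value_def using assms by (intro sum.mono_neutral_left) (auto simp: supp_def)

lemma load_add:
  assumes "finite (supp \<phi>)" and "finite (supp \<psi>)"
  shows "load (\<lambda>p. \<phi> p + \<psi> p) v = load \<phi> v + load \<psi> v"
proof -
  let ?A = "supp \<phi> \<union> supp \<psi>"
  have "load (\<lambda>p. \<phi> p + \<psi> p) v = (\<Sum>p\<in>?A. count_list p v * (\<phi> p + \<psi> p))"
    using assms by (intro load_eq_sum_superset) (auto simp: supp_def)
  also have "\<dots> = (\<Sum>p\<in>?A. count_list p v * \<phi> p) + (\<Sum>p\<in>?A. count_list p v * \<psi> p)"
    by (simp add: distrib_left sum.distrib)
  also have "\<dots> = load \<phi> v + load \<psi> v"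
    using assms load_eq_sum_superset[of ?A \<phi> v] load_eq_sum_superset[of ?A \<psi> v] by auto
  finally show ?thesis .
qed

lemma flow_value_add:
  assumes "finite (supp \<phi>)" and "finite (supp \<psi>)"
  shows "flow_value (\<lambda>p. \<phi> p + \<psi> p) = flow_value \<phi> + flow_value \<psi>"
proof -
  let ?A = "supp \<phi> \<union> supp \<psi>"
  have "flow_value (\<lambda>p. \<phi> p + \<psi> p) = (\<Sum>p\<in>?A. \<phi> p + \<psi> p)"
    using assms by (intro flow_value_eq_sum_superset) (auto simp: supp_def)
  also have "\<dots> = flow_value \<phi> + flow_value \<psi>"
    using assms flow_value_eq_sum_superset[of ?A \<phi>] flow_value_eq_sum_superset[of ?A \<psi>]
    by (auto simp: sum.distrib)
  finally show ?thesis .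
qed

lemma count_mult_le_load:
  assumes "finite (supp \<phi>)"
  shows "count_list p v * \<phi> p \<le> load \<phi> v"
proof (cases "p \<in> supp \<phi>")
  case True
  then show ?thesis unfolding load_def using assms by (intro member_le_sum) auto
qed (simp add: supp_def)

lemma is_flow_zero: "is_flow V E s t \<eta> (\<lambda>_. 0)"
  unfolding is_flow_def supp_def load_def by (simp flip: zero_enat_def)

lemma flow_value_le_max_flow:
  "is_flow V E s t \<eta> \<phi> \<Longrightarrow> enat (flow_value \<phi>) \<le> max_flow V E s t \<eta>"
  unfolding max_flow_def by (rule SUP_upper) auto

lemma min_flow_le_flow_value:
  "inhibits V E s t \<eta> \<phi> \<Longrightarrow> min_flow V E s t \<eta> \<le> enat (flow_value \<phi>)"
  unfolding min_flow_def by (rule INF_lower) auto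

lemma dead_iff: "dead V E s t \<eta> \<longleftrightarrow> (\<forall>\<phi>. is_flow V E s t \<eta> \<phi> \<longrightarrow> flow_value \<phi> = 0)"
proof
  assume "dead V E s t \<eta>"
  then show "\<forall>\<phi>. is_flow V E s t \<eta> \<phi> \<longrightarrow> flow_value \<phi> = 0"
    using flow_value_le_max_flow[of V E s t \<eta>] by (auto simp: dead_def enat_0_iff)
next
  assume "\<forall>\<phi>. is_flow V E s t \<eta> \<phi> \<longrightarrow> flow_value \<phi> = 0"
  then show "dead V E s t \<eta>"
    unfolding dead_def max_flow_def using is_flow_zero[of V E s t \<eta>]
    by (intro SUP_eq_const) (auto simp: zero_enat_def)
qed

lemma dead_if_separator_zero:
  assumes "vertex_separator V E s t T" and "\<forall>v\<in>T. \<eta> v = 0"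
  shows "dead V E s t \<eta>"
  unfolding dead_iff
proof (intro allI impI)
  fix \<phi> assume flow: "is_flow V E s t \<eta> \<phi>"
  have "\<phi> p = 0" if "p \<in> supp \<phi>" for p
  proof -
    from that flow assms(1) obtain x where x: "x \<in> set p" "x \<in> T" "x \<in> V"
      unfolding is_flow_def vertex_separator_def by blast
    have "count_list p x * \<phi> p \<le> load \<phi> x"
      using flow by (intro count_mult_le_load) (simp add: is_flow_def)
    also have "load \<phi> x = 0"
      using flow x assms(2) unfolding is_flow_def by (metis enat_0_iff(2) le_zero_eq)
    finally show ?thesis using x(1) by (simp add: count_list_0_iff)
  qed
  then show "flow_value \<phi> = 0" by (simp add: flow_value_def)
qed

lemma count_list_le_1_if_distinct: "distinct xs \<Longrightarrow> count_list xs x \<le> 1"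
  by (induction xs) auto

lemma separator_if_dead:
  assumes "dead V E s t \<eta>"
  shows "vertex_separator V E s t {v\<in>V. \<eta> v = 0}"
  unfolding vertex_separator_def
proof (intro conjI ballI)
  fix p assume p: "p \<in> st_paths E s t"
  show "set p \<inter> {v\<in>V. \<eta> v = 0} \<noteq> {}"
  proof
    assume avoids: "set p \<inter> {v\<in>V. \<eta> v = 0} = {}"
    obtain q where q: "q \<in> st_paths E s t" "distinct q" "set q \<subseteq> set p"
      using st_paths_distinct_subpath[OF p] by blast
    have "enat (load (path_flow [q]) v) \<le> \<eta> v" if "v \<in> V" for v
    proof (cases "v \<in> set q")
      case True
      with q avoids that have "\<eta> v \<noteq> 0" by auto
      then have "1 \<le> \<eta> v" by (simp add: ileI1 one_eSuc)
      moreover have "count_list q v \<le> 1" using q(2) by (rule count_list_le_1_if_distinct)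
      ultimately show ?thesis
        by (simp add: load_path_flow one_enat_def) (meson enat_ord_simps(1) order_trans)
    qed (simp add: load_path_flow flip: zero_enat_def)
    with q(1) have "is_flow V E s t \<eta> (path_flow [q])" by (simp add: is_flow_def)
    with assms have "flow_value (path_flow [q]) = 0" unfolding dead_iff by blast
    then show False by simp
  qed
qed auto

lemma max_flow_attained:
  assumes "max_flow V E s t \<eta> \<noteq> \<infinity>"
  obtains \<phi> where "is_flow V E s t \<eta> \<phi>" and "enat (flow_value \<phi>) = max_flow V E s t \<eta>"
proof -
  let ?A = "(\<lambda>\<phi>. enat (flow_value \<phi>)) ` {\<phi>. is_flow V E s t \<eta> \<phi>}"
  have nonempty: "?A \<noteq> {}" using is_flow_zero[of V E s t \<eta>] by blast
  have "finite ?A"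
  proof (rule ccontr)
    assume "infinite ?A"
    with nonempty have "Sup ?A = \<infinity>" unfolding Sup_enat_def by argo
    with assms show False unfolding max_flow_def by argo
  qed
  with nonempty have "Sup ?A \<in> ?A" by (simp add: Sup_enat_def)
  with that show ?thesis unfolding max_flow_def by auto
qed

lemma maximum_flow_inhibits:
  assumes flow: "is_flow V E s t \<eta> \<phi>" and max: "enat (flow_value \<phi>) = max_flow V E s t \<eta>"
  shows "inhibits V E s t \<eta> \<phi>"
  unfolding inhibits_def dead_iff
proof (intro conjI allI impI flow)
  fix \<psi> assume res_flow: "is_flow V E s t (residual \<eta> \<phi>) \<psi>"
  have fin: "finite (supp \<phi>)" "finite (supp \<psi>)"
    using flow res_flow by (simp_all add: is_flow_def)
  have "is_flow V E s t \<eta> (\<lambda>p. \<phi> p + \<psi> p)"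
    unfolding is_flow_def
  proof (intro conjI ballI)
    have "supp (\<lambda>p. \<phi> p + \<psi> p) = supp \<phi> \<union> supp \<psi>" by (auto simp: supp_def)
    then show "finite (supp (\<lambda>p. \<phi> p + \<psi> p))" "supp (\<lambda>p. \<phi> p + \<psi> p) \<subseteq> st_paths E s t"
      using flow res_flow by (auto simp: is_flow_def)
    fix v assume "v \<in> V"
    then have "enat (load \<phi> v) \<le> \<eta> v" "enat (load \<psi> v) \<le> \<eta> v - enat (load \<phi> v)"
      using flow res_flow by (auto simp: is_flow_def residual_def)
    then show "enat (load (\<lambda>p. \<phi> p + \<psi> p) v) \<le> \<eta> v"
      by (cases "\<eta> v") (auto simp: load_add[OF fin])
  qed
  from flow_value_le_max_flow[OF this] have "flow_value \<phi> + flow_value \<psi> \<le> flow_value \<phi>"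
    unfolding max[symmetric] by (simp add: flow_value_add[OF fin])
  then show "flow_value \<psi> = 0" by simp
qed

lemma min_flow_le_max_flow: "min_flow V E s t \<eta> \<le> max_flow V E s t \<eta>"
proof (cases "max_flow V E s t \<eta> = \<infinity>")
  case False
  then obtain \<phi> where "is_flow V E s t \<eta> \<phi>" "enat (flow_value \<phi>) = max_flow V E s t \<eta>"
    by (rule max_flow_attained)
  then show ?thesis by (metis maximum_flow_inhibits min_flow_le_flow_value)
qed simp

lemma sum_count_list_eq_length_filter:
  assumes "finite T"
  shows "(\<Sum>v\<in>T. count_list p v) = length (filter (\<lambda>x. x \<in> T) p)"
proof (induction p)
  case (Cons x p)
  have "(\<Sum>v\<in>T. count_list (x # p) v) = (\<Sum>v\<in>T. (if x = v then 1 else 0) + count_list p v)"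
    by (rule sum.cong) auto
  also have "\<dots> = (\<Sum>v\<in>T. if x = v then 1 else 0) + (\<Sum>v\<in>T. count_list p v)"
    by (rule sum.distrib)
  finally show ?case using Cons assms by (simp add: sum.delta)
qed simp

lemma flow_value_eq_sum_load:
  assumes "finite T" and "is_flow V E s t \<eta> \<phi>"
    and "\<forall>p\<in>st_paths E s t. length (filter (\<lambda>x. x \<in> T) p) = 1"
  shows "flow_value \<phi> = (\<Sum>v\<in>T. load \<phi> v)"
proof -
  have "(\<Sum>v\<in>T. load \<phi> v) = (\<Sum>p\<in>supp \<phi>. (\<Sum>v\<in>T. count_list p v) * \<phi> p)"
    unfolding load_def by (subst sum.swap) (simp add: sum_distrib_right)
  also have "\<dots> = (\<Sum>p\<in>supp \<phi>. \<phi> p)"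
  proof (rule sum.cong)
    fix p assume "p \<in> supp \<phi>"
    with assms(2,3) have "length (filter (\<lambda>x. x \<in> T) p) = 1" by (auto simp: is_flow_def)
    then show "(\<Sum>v\<in>T. count_list p v) * \<phi> p = \<phi> p"
      by (simp add: sum_count_list_eq_length_filter[OF assms(1)])
  qed simp
  finally show ?thesis by (simp add: flow_value_def)
qed

lemma saturated_if_residual_zero:
  assumes "is_flow V E s t \<eta> \<phi>" and "v \<in> V" and "residual \<eta> \<phi> v = 0"
  shows "\<eta> v = enat (load \<phi> v)"
proof -
  from assms have "enat (load \<phi> v) \<le> \<eta> v" and "\<eta> v - enat (load \<phi> v) = 0"
    by (simp_all add: is_flow_def residual_def)
  then show ?thesis by (cases "\<eta> v") (simp_all add: zero_enat_def)
qed

lemma max_flow_le_inhibiting_flow_value: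
  assumes "finite V" and no_return: "\<forall>T. mvs V E s t T \<longrightarrow> \<not> walk_returns E T"
    and inhibits: "inhibits V E s t \<eta> \<phi>"
  shows "max_flow V E s t \<eta> \<le> enat (flow_value \<phi>)"
proof -
  have flow: "is_flow V E s t \<eta> \<phi>" and dead: "dead V E s t (residual \<eta> \<phi>)"
    using inhibits by (simp_all add: inhibits_def)
  define Z where "Z = {v\<in>V. residual \<eta> \<phi> v = 0}"
  have "finite Z" using \<open>finite V\<close> unfolding Z_def by (rule finite_subset[rotated]) blast
  moreover have "vertex_separator V E s t Z" unfolding Z_def by (rule separator_if_dead[OF dead])
  ultimately obtain T where "T \<subseteq> Z" and mvs: "mvs V E s t T"
    using mvs_exists_subset by metis
  have "finite T" using \<open>T \<subseteq> Z\<close> \<open>finite Z\<close> by (rule finite_subset)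
  from no_return mvs have "\<not> walk_returns E T" by blast
  then have once: "\<forall>p\<in>st_paths E s t. length (filter (\<lambda>x. x \<in> T) p) = 1"
    using mvs_meets_st_path_once[OF mvs] by blast
  have saturated: "\<eta> v = enat (load \<phi> v)" "v \<in> V" if "v \<in> T" for v
    using that \<open>T \<subseteq> Z\<close> saturated_if_residual_zero[OF flow] by (auto simp: Z_def)
  have "flow_value \<psi> \<le> flow_value \<phi>" if "is_flow V E s t \<eta> \<psi>" for \<psi>
  proof -
    have "flow_value \<psi> = (\<Sum>v\<in>T. load \<psi> v)"
      using flow_value_eq_sum_load[OF \<open>finite T\<close> that once] .
    also have "\<dots> \<le> (\<Sum>v\<in>T. load \<phi> v)"
    proof (rule sum_mono)
      fix v assume "v \<in> T"
      with that saturated(2) have "enat (load \<psi> v) \<le> \<eta> v" by (simp add: is_flow_def)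
      with saturated(1)[OF \<open>v \<in> T\<close>] show "load \<psi> v \<le> load \<phi> v" by simp
    qed
    also have "\<dots> = flow_value \<phi>"
      using flow_value_eq_sum_load[OF \<open>finite T\<close> flow once] by simp
    finally show ?thesis .
  qed
  then show ?thesis unfolding max_flow_def by (intro SUP_least) simp
qed

lemma min_flow_eq_max_flow:
  assumes "finite V" and "\<forall>T. mvs V E s t T \<longrightarrow> \<not> walk_returns E T"
  shows "min_flow V E s t \<eta> = max_flow V E s t \<eta>"
proof (rule antisym)
  show "max_flow V E s t \<eta> \<le> min_flow V E s t \<eta>"
    unfolding min_flow_def using max_flow_le_inhibiting_flow_value[OF assms]
    by (intro INF_greatest) simp
qed (rule min_flow_le_max_flow)

lemma weak_if_path_covers_two_paths:
  assumes sep: "vertex_separator V E s t T" and "s \<notin> T" and "t \<notin> T"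
    and q: "q \<in> st_paths E s t" and p: "p \<in> st_paths E s t" and p': "p' \<in> st_paths E s t"
    and covers: "\<forall>v\<in>T. count_list p v + count_list p' v \<le> count_list q v"
  shows "weak V E s t"
proof -
  define \<eta> where "\<eta> v = (if v = s \<or> v = t then \<infinity>
      else enat (count_list q v + (if v \<in> T then 0 else count_list p v + count_list p' v)))" for v
  have "channel V s t \<eta>" by (simp add: channel_def \<eta>_def)
  have "is_flow V E s t \<eta> (path_flow [q])"
    using q by (auto simp: is_flow_def load_path_flow \<eta>_def)
  moreover have "dead V E s t (residual \<eta> (path_flow [q]))"
    using sep \<open>s \<notin> T\<close> \<open>t \<notin> T\<close>
    by (intro dead_if_separator_zero) (auto simp: residual_def load_path_flow \<eta>_def zero_enat_def)
  ultimately have "min_flow V E s t \<eta> \<le> enat 1"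
    using min_flow_le_flow_value[of V E s t \<eta> "path_flow [q]"] by (simp add: inhibits_def)
  have "is_flow V E s t \<eta> (path_flow [p, p'])"
    using p p' covers by (auto simp: is_flow_def load_path_flow \<eta>_def)
  then have "enat 2 \<le> max_flow V E s t \<eta>"
    using flow_value_le_max_flow[of V E s t \<eta> "path_flow [p, p']"] by (simp add: numeral_2_eq_2)
  moreover have "\<not> enat 2 \<le> enat 1" by simp
  ultimately have "min_flow V E s t \<eta> \<noteq> max_flow V E s t \<eta>"
    using \<open>min_flow V E s t \<eta> \<le> enat 1\<close> by (metis order.trans)
  with \<open>channel V s t \<eta>\<close> show ?thesis unfolding weak_def by blast
qed

lemma count_list_walk_ends:
  assumes "is_walk E w" and "length w \<ge> 2" and "hd w = a" and "last w = b"
  shows "(if v = a then 1 else 0) + (if v = b then 1 else 0) \<le> count_list w v"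
proof -
  have w: "w = a # tl w" using assms(2,3) by (cases w) auto
  have "tl w \<noteq> []" using assms(2) by (cases w) auto
  with w assms(4) have "b \<in> set (tl w)" by (metis last_ConsR last_in_set)
  then have "(if v = b then 1 else 0) \<le> count_list (tl w) v"
    using count_list_0_iff[of "tl w" b] by (auto simp: Suc_le_eq)
  then show ?thesis by (subst w) simp
qed

lemma is_walk_first_last_edge:
  assumes "is_walk E w" and "length w \<ge> 2"
  shows "(hd w, w ! 1) \<in> E" and "(w ! (length w - 2), last w) \<in> E"
proof -
  have step: "(w ! i, w ! Suc i) \<in> E" if "i < length w - 1" for i
    using assms(1) that by (simp add: is_walk_def)
  show "(hd w, w ! 1) \<in> E"
    using step[of 0] assms(2) hd_conv_nth[of w] by force
  have "Suc (length w - 2) = length w - 1" using assms(2) by arith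
  then show "(w ! (length w - 2), last w) \<in> E"
    using step[of "length w - 2"] assms(2) last_conv_nth[of w] by force
qed

text \<open>Every channel is infinite at \<open>s\<close> and \<open>t\<close>, so the construction below needs \<open>T\<close> to
  avoid them: \<open>{s}\<close> and \<open>{t}\<close> are separators, and no walk enters \<open>s\<close> or leaves \<open>t\<close>.\<close>

lemma mvs_walk_ends_avoid_endpoints:
  assumes G: "st_graph V E s t" and mvs: "mvs V E s t T" and "a \<in> T" and "b \<in> T"
    and w: "is_walk E w" "length w \<ge> 2" "hd w = a" "last w = b"
  shows "s \<notin> T" and "t \<notin> T"
proof -
  have "\<forall>p\<in>st_paths E s t. s \<in> set p \<and> t \<in> set p" by (auto simp: st_paths_def is_walk_def)
  then have "s \<in> T \<Longrightarrow> b = s" and "t \<in> T \<Longrightarrow> a = t"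
    using mvs_eq_singleton[OF mvs] \<open>a \<in> T\<close> \<open>b \<in> T\<close> by blast+
  with is_walk_first_last_edge[OF w(1,2)] w(3,4) G show "s \<notin> T" and "t \<notin> T"
    by (auto simp: st_graph_def)
qed

lemma weak_if_mvs_walk_returns:
  assumes G: "st_graph V E s t" and mvs: "mvs V E s t T" and "walk_returns E T"
  shows "weak V E s t"
proof -
  obtain a b w where "a \<in> T" "b \<in> T"
    and w: "is_walk E w" "length w \<ge> 2" "hd w = a" "last w = b"
    using assms(3) unfolding walk_returns_def by blast
  note avoid = mvs_walk_ends_avoid_endpoints[OF G mvs \<open>a \<in> T\<close> \<open>b \<in> T\<close> w]
  obtain ua va where pa: "ua @ a # va \<in> st_paths E s t"
    and count_pa: "\<forall>v\<in>T. count_list (ua @ a # va) v = (if v = a then 1 else 0)"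
    using mvs_private_path[OF mvs \<open>a \<in> T\<close>] by blast
  obtain ub vb where pb: "ub @ b # vb \<in> st_paths E s t"
    and count_pb: "\<forall>v\<in>T. count_list (ub @ b # vb) v = (if v = b then 1 else 0)"
    using mvs_private_path[OF mvs \<open>b \<in> T\<close>] by blast
  have q: "ua @ w @ vb \<in> st_paths E s t"
    using st_paths_through_walk[OF pa pb w(1) w(3) w(4)] .
  have covers: "count_list (ua @ a # va) v + count_list (ub @ b # vb) v
      \<le> count_list (ua @ w @ vb) v" if "v \<in> T" for v
  proof -
    have "count_list (ua @ a # va) v + count_list (ub @ b # vb) v
        = (if v = a then 1 else 0) + (if v = b then 1 else 0)"
      using that by (simp only: count_pa count_pb)
    also have "\<dots> \<le> count_list w v" by (rule count_list_walk_ends[OF w])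
    also have "\<dots> \<le> count_list (ua @ w @ vb) v" by simp
    finally show ?thesis .
  qed
  have "vertex_separator V E s t T" using mvs by (simp add: mvs_def)
  from weak_if_path_covers_two_paths[OF this avoid q pa pb] covers
  show ?thesis by blast
qed

theorem theorem1:
  assumes "st_graph V E s t"
  shows "weak V E s t \<longleftrightarrow>
    (\<exists>T a b p. mvs V E s t T \<and> a \<in> T \<and> b \<in> T \<and>
       is_walk E p \<and> length p \<ge> 2 \<and> hd p = a \<and> last p = b)"
proof
  assume "weak V E s t"
  then obtain \<eta> where "min_flow V E s t \<eta> \<noteq> max_flow V E s t \<eta>"
    unfolding weak_def by blast
  moreover have "finite V" using assms by (simp add: st_graph_def)
  ultimately obtain T where "mvs V E s t T" and "walk_returns E T"
    using min_flow_eq_max_flow by metis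
  then show "\<exists>T a b p. mvs V E s t T \<and> a \<in> T \<and> b \<in> T \<and>
      is_walk E p \<and> length p \<ge> 2 \<and> hd p = a \<and> last p = b"
    unfolding walk_returns_def by blast
next
  assume "\<exists>T a b p. mvs V E s t T \<and> a \<in> T \<and> b \<in> T \<and>
      is_walk E p \<and> length p \<ge> 2 \<and> hd p = a \<and> last p = b"
  then obtain T where "mvs V E s t T" and "walk_returns E T"
    unfolding walk_returns_def by blast
  with assms show "weak V E s t" by (rule weak_if_mvs_walk_returns)
qed

end
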